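(* Let $p$ be a prime, and let $e\ge 1$ and $k\ge 1$ be integers. Put $r=\gcd(k,e+1)$. Then $$\sigma_k(p^e)\equiv r\,\frac{p^{e+1}-1}{p^{r}-1}\pmod{\sigma(p^e)}.$$ Moreover, $\sigma(p^e)$ divides $\sigma_k(p^e)$ if and only if $r=1$.
   Context: For integers $k\ge 0$ and $n\ge 1$, $\sigma_k(n)=\sum_{d\mid n} d^k$, and $\sigma=\sigma_1$ is the sum-of-divisors function. *)

theory Defs
  imports "HOL-Number_Theory.Number_Theory"
begin

definition divisor_sigma :: "nat \<Rightarrow> nat \<Rightarrow> nat" where
  "divisor_sigma k n = (\<Sum>d\<in>{d. d dvd n}. d ^ k)"

end

theory Submission
  imports Defs
begin

text \<open>
  Write e + 1 = r d and k = r k' with k' coprime to d, and put q = p^r. Then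
  \<sigma>_k(p^e) = \<Sum>_{i < r d} q^(i k'), and \<sigma>(p^e) divides p^(e+1) - 1 = q^d - 1, so modulo \<sigma>(p^e)
  only i k' mod d matters. As i runs over [0, r d), the residue i k' mod d runs r times through all
  residues, whence \<sigma>_k(p^e) \<equiv> r (1 + q + ... + q^(d-1)) = r (p^(e+1) - 1) / (p^r - 1).
  Finally \<sigma>(p^e) = (1 + p + ... + p^(r-1)) (1 + q + ... + q^(d-1)), so \<sigma>(p^e) divides
  \<sigma>_k(p^e) iff 1 + p + ... + p^(r-1) divides r, which happens only for r = 1.
\<close>

lemma geometric_sum_nat: "((q::nat) - 1) * (\<Sum>i<n. q ^ i) = q ^ n - 1"
proof (cases "q = 0")
  case True
  then show ?thesis by (cases n) simp_all
next
  case False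
  then have "int ((q - 1) * (\<Sum>i<n. q ^ i)) = (int q - 1) * (\<Sum>i<n. int q ^ i)"
    by (simp add: of_nat_diff)
  also have "\<dots> = int q ^ n - 1"
    by (rule power_diff_1_eq[symmetric])
  also have "\<dots> = int (q ^ n - 1)"
    using False by (simp add: of_nat_diff)
  finally show ?thesis by (simp only: of_nat_eq_iff)
qed

lemma sum_lessThan_add:
  "(\<Sum>i<m + n. f i) = (\<Sum>i<m. f i) + (\<Sum>i<n::nat. f (m + i))"
  by (induction n) (simp_all add: add.assoc)

lemma sum_power_mult_split:
  fixes x :: "'a::comm_semiring_1"
  shows "(\<Sum>i<r * d. x ^ i) = (\<Sum>i<r. x ^ i) * (\<Sum>j<d. (x ^ r) ^ j)"
proof (induction d)
  case 0
  then show ?case by simp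
next
  case (Suc d)
  have "(\<Sum>i<r * Suc d. x ^ i) = (\<Sum>i<r * d. x ^ i) + (\<Sum>i<r. x ^ (r * d + i))"
    using sum_lessThan_add[of "\<lambda>i. x ^ i" "r * d" r] by (simp add: add.commute)
  also have "(\<Sum>i<r. x ^ (r * d + i)) = (\<Sum>i<r. x ^ i) * (x ^ r) ^ d"
    by (simp add: sum_distrib_right power_add mult.commute flip: power_mult)
  finally show ?case
    using Suc by (simp add: distrib_left)
qed

lemma sum_mod_periodic:
  fixes g :: "nat \<Rightarrow> 'a::comm_semiring_1"
  shows "(\<Sum>i<d * a. g (i mod d)) = of_nat a * (\<Sum>b<d. g b)"
proof (induction a)
  case 0
  then show ?case by simp
next
  case (Suc a)
  have "(\<Sum>i<d * Suc a. g (i mod d)) = (\<Sum>i<d * a. g (i mod d)) + (\<Sum>b<d. g ((d * a + b) mod d))"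
    using sum_lessThan_add[of "\<lambda>i. g (i mod d)" "d * a" d] by (simp add: add.commute)
  then show ?case
    using Suc by (simp add: algebra_simps)
qed

lemma cong_pow_mod_exponent:
  fixes a m :: nat
  assumes "[a ^ d = 1] (mod m)"
  shows "[a ^ x = a ^ (x mod d)] (mod m)"
proof -
  have "a ^ x = (a ^ d) ^ (x div d) * a ^ (x mod d)"
    by (simp flip: power_mult power_add)
  also have "[\<dots> = 1 ^ (x div d) * a ^ (x mod d)] (mod m)"
    by (intro cong_mult cong_pow assms cong_refl)
  finally show ?thesis by simp
qed

lemma bij_betw_mult_mod:
  fixes k d :: nat
  assumes "coprime k d"
  shows "bij_betw (\<lambda>b. b * k mod d) {..<d} {..<d}"
proof -
  have "inj_on (\<lambda>b. b * k mod d) {..<d}"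
  proof (rule inj_onI)
    fix a b
    assume "a \<in> {..<d}" "b \<in> {..<d}" "a * k mod d = b * k mod d"
    then show "a = b"
      using assms cong_mult_rcancel_nat[of k d a b] by (simp add: cong_def coprime_commute)
  qed
  moreover have "(\<lambda>b. b * k mod d) ` {..<d} \<subseteq> {..<d}"
    by auto
  ultimately show ?thesis
    by (simp add: bij_betw_def endo_inj_surj)
qed

lemma less_geometric_sum:
  fixes p r :: nat
  assumes "2 \<le> p" "2 \<le> r"
  shows "r < (\<Sum>i<r. p ^ i)"
proof -
  obtain j where r: "r = Suc j" and "1 \<le> j"
    using assms(2) by (cases r) auto
  have "j \<le> (\<Sum>i<j. p ^ i)"
    using assms(1) sum_mono[of "{..<j}" "\<lambda>_. 1" "\<lambda>i. p ^ i"] by simp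
  moreover have "p ^ 1 \<le> p ^ j"
    using assms(1) \<open>1 \<le> j\<close> by (intro power_increasing) auto
  ultimately show ?thesis
    using assms(1) r by simp
qed

lemma sum_power_mult_exponent_cong:
  fixes q m k d a :: nat
  assumes "[q ^ d = 1] (mod m)" "coprime k d"
  shows "[(\<Sum>i<d * a. q ^ (i * k)) = a * (\<Sum>b<d. q ^ b)] (mod m)"
proof -
  have "[(\<Sum>i<d * a. q ^ (i * k)) = (\<Sum>i<d * a. q ^ (i mod d * k mod d))] (mod m)"
  proof (rule cong_sum)
    fix i
    show "[q ^ (i * k) = q ^ (i mod d * k mod d)] (mod m)"
      using cong_pow_mod_exponent[OF assms(1), of "i * k"] by (simp add: mod_mult_left_eq)
  qed
  also have "(\<Sum>i<d * a. q ^ (i mod d * k mod d)) = a * (\<Sum>b<d. q ^ (b * k mod d))"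
    using sum_mod_periodic[of "\<lambda>b. q ^ (b * k mod d)" d a] by simp
  also have "(\<Sum>b<d. q ^ (b * k mod d)) = (\<Sum>b<d. q ^ b)"
    using sum.reindex_bij_betw[OF bij_betw_mult_mod[OF assms(2)], of "\<lambda>b. q ^ b"] by simp
  finally show ?thesis .
qed

lemma geometric_sum_power_cong:
  fixes p r d k :: nat
  assumes "0 < p" "coprime k d"
  shows "[(\<Sum>i<r * d. (p ^ (r * k)) ^ i) = r * (\<Sum>b<d. (p ^ r) ^ b)] (mod (\<Sum>i<r * d. p ^ i))"
proof -
  have "(p - 1) * (\<Sum>i<r * d. p ^ i) = (p ^ r) ^ d - 1"
    using geometric_sum_nat[of p "r * d"] by (simp add: power_mult)
  then have "(\<Sum>i<r * d. p ^ i) dvd (p ^ r) ^ d - 1"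
    by (metis dvd_triv_right)
  then have "[(p ^ r) ^ d = 1] (mod (\<Sum>i<r * d. p ^ i))"
    using assms(1) by (simp add: cong_altdef_nat)
  from sum_power_mult_exponent_cong[OF this assms(2), of r]
  show ?thesis
    by (simp add: mult_ac flip: power_mult)
qed

lemma geometric_sum_dvd_mult_iff:
  fixes p r d :: nat
  assumes "2 \<le> p" "0 < r" "0 < d"
  shows "(\<Sum>i<r * d. p ^ i) dvd r * (\<Sum>b<d. (p ^ r) ^ b) \<longleftrightarrow> r = 1"
proof -
  have "(\<Sum>b<d. (p ^ r) ^ b) \<noteq> 0"
    using assms by auto
  then have "(\<Sum>i<r. p ^ i) * (\<Sum>b<d. (p ^ r) ^ b) dvd r * (\<Sum>b<d. (p ^ r) ^ b)
      \<longleftrightarrow> (\<Sum>i<r. p ^ i) dvd r"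
    by (rule dvd_times_right_cancel_iff)
  then have "(\<Sum>i<r * d. p ^ i) dvd r * (\<Sum>b<d. (p ^ r) ^ b) \<longleftrightarrow> (\<Sum>i<r. p ^ i) dvd r"
    by (simp only: sum_power_mult_split)
  also have "\<dots> \<longleftrightarrow> r = 1"
  proof
    assume dvd: "(\<Sum>i<r. p ^ i) dvd r"
    show "r = 1"
    proof (rule ccontr)
      assume "r \<noteq> 1"
      then have "r < (\<Sum>i<r. p ^ i)"
        using assms(1,2) by (intro less_geometric_sum) auto
      with dvd assms(2) show False
        by (auto dest: dvd_imp_le)
    qed
  qed simp
  finally show ?thesis .
qed

lemma divisor_sigma_prime_power:
  assumes "prime p"
  shows "divisor_sigma k (p ^ e) = (\<Sum>i<Suc e. (p ^ k) ^ i)"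
proof -
  have "{d. d dvd p ^ e} = (\<lambda>i. p ^ i) ` {..e}"
    using divides_primepow_nat[OF assms] by auto
  moreover have "inj_on (\<lambda>i. p ^ i) {..e}"
    using prime_gt_1_nat[OF assms] by (auto simp: inj_on_def)
  ultimately show ?thesis
    unfolding divisor_sigma_def
    by (simp add: sum.reindex lessThan_Suc_atMost mult.commute flip: power_mult)
qed

theorem mainTheorem4:
  fixes p e k r :: nat
  assumes "prime p" and "e \<ge> 1" and "k \<ge> 1" and "r = gcd k (e + 1)"
  shows "[divisor_sigma k (p ^ e) = r * ((p ^ (e + 1) - 1) div (p ^ r - 1))]
           (mod divisor_sigma 1 (p ^ e))
         \<and> (divisor_sigma 1 (p ^ e) dvd divisor_sigma k (p ^ e) \<longleftrightarrow> r = 1)"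
proof -
  define d where "d = (e + 1) div r"
  define k' where "k' = k div r"
  have "0 < r" "e + 1 = r * d" "k = r * k'" "coprime k' d"
    using assms(3,4) div_gcd_coprime[of k "e + 1"] by (simp_all add: d_def k'_def)
  then have "0 < d"
    by (cases d) auto
  have "2 \<le> p"
    using assms(1) prime_ge_2_nat by blast
  have sigma: "divisor_sigma j (p ^ e) = (\<Sum>i<r * d. (p ^ j) ^ i)" for j
    using divisor_sigma_prime_power[OF assms(1), of j e] \<open>e + 1 = r * d\<close> by (simp only: Suc_eq_plus1)
  have "p ^ (e + 1) - 1 = (p ^ r - 1) * (\<Sum>b<d. (p ^ r) ^ b)"
    using geometric_sum_nat[of "p ^ r" d] \<open>e + 1 = r * d\<close> by (simp add: power_mult)
  moreover have "p ^ 1 \<le> p ^ r"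
    using \<open>2 \<le> p\<close> \<open>0 < r\<close> by (intro power_increasing) auto
  ultimately have "(p ^ (e + 1) - 1) div (p ^ r - 1) = (\<Sum>b<d. (p ^ r) ^ b)"
    using \<open>2 \<le> p\<close> by simp
  with geometric_sum_power_cong[of p k' d r] geometric_sum_dvd_mult_iff[of p r d]
  show ?thesis
    using \<open>2 \<le> p\<close> \<open>0 < r\<close> \<open>0 < d\<close> \<open>k = r * k'\<close> \<open>coprime k' d\<close>
    by (simp add: sigma cong_dvd_iff)
qed

end
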